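(* The measure space $(\mathbb{R}^{\mathbb{N}},\mu)$ is not localizable.
   Context: Let $\mathcal{B}$ be the Borel $\sigma$-algebra of $\mathbb{R}$, $\lambda$ the Lebesgue measure, and $\mathcal{B}_{\infty}$ the $\sigma$-algebra on $\mathbb{R}^{\mathbb{N}}$ generated by the cylinder sets $\prod_{i=1}^{m}C_{i}\times\prod_{i=m+1}^{\infty}\mathbb{R}$ with $C_i\in\mathcal{B}$, $m\in\mathbb{N}$. Let $\mathcal{F}(\mathcal{B},\lambda)$ be the set of finite rectangles $\prod_{i\in\mathbb{N}}C_{i}$ with $C_i\in\mathcal{B}$ and $\prod_{i}\lambda(C_i)\in[0,\infty)$, with $\mathrm{vol}(\prod_{i}C_i):=\prod_i\lambda(C_i)$. The measure $\mu$ is the restriction to $\mathcal{B}_{\infty}$ of the outer measure $\mu^{\ast}(A):=\inf\{\sum_{n}\mathrm{vol}(\mathscr{C}_{n}) : \mathscr{C}_{n}\in\mathcal{F}(\mathcal{B},\lambda),\ A\subset\bigcup_{n}\mathscr{C}_{n}\}$ ($\inf\varnothing=\infty$). A measure space $(X,\Sigma,\nu)$ is localizable if $\nu$ is semi-finite and every $\mathcal{E}\subset\Sigma$ admits an essential supremum, i.e., some $H_{\mathcal{E}}\in\Sigma$ with $\nu(E\setminus H_{\mathcal{E}})=0$ for all $E\in\mathcal{E}$, and such that whenever $G\in\Sigma$ satisfies $\nu(E\setminus G)=0$ for all $E\in\mathcal{E}$, then $\nu(H_{\mathcal{E}}\setminus G)=0$. *)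

theory Defs
  imports "HOL-Analysis.Analysis"
begin

definition cylinders :: "(nat \<Rightarrow> real) set set" where
  "cylinders = {{x. \<forall>i<m. x i \<in> C i} | C m. \<forall>i. C i \<in> sets borel}"

definition B_inf :: "(nat \<Rightarrow> real) set set" where
  "B_inf = sigma_sets UNIV cylinders"

text \<open>Infinite product of the Lebesgue measures of the factors, as the limit of the
  partial products in [0,infinity] (ennreal, with 0 * infinity = 0).\<close>

definition has_vol :: "(nat \<Rightarrow> real set) \<Rightarrow> ennreal \<Rightarrow> bool" where
  "has_vol C v \<longleftrightarrow> (\<lambda>n. \<Prod>i<n. emeasure lborel (C i)) \<longlonglongrightarrow> v"

definition finite_rectangle :: "(nat \<Rightarrow> real set) \<Rightarrow> bool" where
  "finite_rectangle C \<longleftrightarrow> (\<forall>i. C i \<in> sets borel) \<and> (\<exists>v. has_vol C v \<and> v < \<infinity>)"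

definition vol :: "(nat \<Rightarrow> real set) \<Rightarrow> ennreal" where
  "vol C = lim (\<lambda>n. \<Prod>i<n. emeasure lborel (C i))"

definition mu_star :: "(nat \<Rightarrow> real) set \<Rightarrow> ennreal" where
  "mu_star A = (INF R \<in> {R :: nat \<Rightarrow> nat \<Rightarrow> real set.
        (\<forall>n. finite_rectangle (R n)) \<and> A \<subseteq> (\<Union>n. Pi UNIV (R n))}.
        \<Sum>n. vol (R n))"

definition mu :: "(nat \<Rightarrow> real) set \<Rightarrow> ennreal" where
  "mu A = (if A \<in> B_inf then mu_star A else 0)"

text \<open>Localizability of an abstract measure space (Sigma, nu) (the underlying set X
  is implicit as the top element of Sigma).\<close>

definition semi_finite :: "'a set set \<Rightarrow> ('a set \<Rightarrow> ennreal) \<Rightarrow> bool" where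
  "semi_finite \<Sigma> \<nu> \<longleftrightarrow>
     (\<forall>E\<in>\<Sigma>. \<nu> E = \<infinity> \<longrightarrow> (\<exists>F\<in>\<Sigma>. F \<subseteq> E \<and> 0 < \<nu> F \<and> \<nu> F < \<infinity>))"

definition is_ess_sup :: "'a set set \<Rightarrow> ('a set \<Rightarrow> ennreal) \<Rightarrow> 'a set set \<Rightarrow> 'a set \<Rightarrow> bool" where
  "is_ess_sup \<Sigma> \<nu> \<E> H \<longleftrightarrow> H \<in> \<Sigma> \<and> (\<forall>E\<in>\<E>. \<nu> (E - H) = 0) \<and>
     (\<forall>G\<in>\<Sigma>. (\<forall>E\<in>\<E>. \<nu> (E - G) = 0) \<longrightarrow> \<nu> (H - G) = 0)"

definition localizable :: "'a set set \<Rightarrow> ('a set \<Rightarrow> ennreal) \<Rightarrow> bool" where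
  "localizable \<Sigma> \<nu> \<longleftrightarrow> semi_finite \<Sigma> \<nu> \<and> (\<forall>\<E>. \<E> \<subseteq> \<Sigma> \<longrightarrow> (\<exists>H. is_ess_sup \<Sigma> \<nu> \<E> H))"

end

theory Submission
  imports Defs
begin

text \<open>Let \<open>E = \<Prod>\<^sub>i D\<^sub>i\<close> with \<open>D\<^sub>i = [0,1/2]\<close> for even \<open>i\<close> and \<open>D\<^sub>i = \<real>\<close> for odd \<open>i\<close>.
  Then \<open>E \<in> B_inf\<close> and \<open>\<mu>(E) = \<infinity>\<close>, but every subset of \<open>E\<close> of finite outer measure is null,
  so \<open>\<mu>\<close> is not even semi-finite.

  Subsets are null: a finite rectangle \<open>C\<close> either has a null side, or all its sides have finite
  positive measure; then, if its volume is positive, the side measures tend to \<open>1\<close>, so the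
  factors \<open>\<lambda>(C\<^sub>i \<inter> [0,1/2]) \<le> 1/2\<close> at even \<open>i\<close> make the volume of \<open>C \<inter> E\<close> vanish.

  \<open>\<mu>(E) = \<infinity>\<close>: given finite rectangles \<open>R\<^sub>n\<close>, choose for each \<open>n\<close> a side \<open>j\<^sub>n\<close> that is either
  null or equal to \<open>2n+1\<close> (then of finite measure). For every \<open>i\<close>, the union of the sides
  \<open>R\<^sub>n i\<close> with \<open>j\<^sub>n = i\<close> is a null set plus at most one set of finite measure, hence misses
  some \<open>x\<^sub>i \<in> D\<^sub>i\<close>; the point \<open>x \<in> E\<close> then lies in no \<open>R\<^sub>n\<close>.\<close>

lemma prod_tendsto_0_if_frequently_le:
  fixes t :: "nat \<Rightarrow> real"
  assumes t_nonneg: "\<And>i. 0 \<le> t i" and t_le_1: "\<And>i. t i \<le> 1"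
    and "q < 1" and freq: "\<exists>\<^sub>F i in sequentially. t i \<le> q"
  shows "(\<lambda>n. \<Prod>i<n. t i) \<longlonglongrightarrow> 0"
proof -
  define s where "s = (\<lambda>n. \<Prod>i<n. t i)"
  have s_Suc: "s (Suc n) = s n * t n" for n
    by (simp add: s_def)
  have s_nonneg: "0 \<le> s n" for n
    by (simp add: s_def prod_nonneg t_nonneg)
  have "decseq s"
    by (rule decseq_SucI) (simp add: s_Suc mult_left_le s_nonneg t_le_1)
  then obtain L where L: "s \<longlonglongrightarrow> L"
    using decseq_convergent[of s 0] s_nonneg by blast
  have "L = 0"
  proof (rule ccontr)
    assume "L \<noteq> 0"
    then have L_pos: "0 < L"
      using LIMSEQ_le_const[OF L] s_nonneg by force
    have "s n \<noteq> 0" for n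
      using decseq_ge[OF \<open>decseq s\<close> L, of n] L_pos by simp
    then have "t = (\<lambda>n. s (Suc n) / s n)"
      by (simp add: s_Suc)
    moreover have "(\<lambda>n. s (Suc n) / s n) \<longlonglongrightarrow> L / L"
      using L L_pos by (intro tendsto_divide LIMSEQ_Suc) auto
    ultimately have "t \<longlonglongrightarrow> 1"
      using L_pos by simp
    then have "\<forall>\<^sub>F i in sequentially. q < t i"
      using \<open>q < 1\<close> by (rule order_tendstoD)
    then have "\<forall>\<^sub>F i in sequentially. \<not> t i \<le> q"
      by (rule eventually_mono) simp
    with freq show False
      by (simp add: frequently_def)
  qed
  with L show ?thesis
    by (simp only: s_def)
qed

lemma prod_tendsto_0_if_dominated_frequently_le:
  fixes a b :: "nat \<Rightarrow> real"
  assumes a_pos: "\<And>i. 0 < a i" and b_nonneg: "\<And>i. 0 \<le> b i" and b_le_a: "\<And>i. b i \<le> a i"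
    and prod_a: "(\<lambda>n. \<Prod>i<n. a i) \<longlonglongrightarrow> r"
    and "c < 1" and freq: "\<exists>\<^sub>F i in sequentially. b i \<le> c"
  shows "(\<lambda>n. \<Prod>i<n. b i) \<longlonglongrightarrow> 0"
proof (cases "r = 0")
  case True
  show ?thesis
  proof (rule tendsto_sandwich)
    show "\<forall>\<^sub>F n in sequentially. 0 \<le> (\<Prod>i<n. b i)"
      by (simp add: b_nonneg prod_nonneg)
    show "\<forall>\<^sub>F n in sequentially. (\<Prod>i<n. b i) \<le> (\<Prod>i<n. a i)"
      by (simp add: b_le_a b_nonneg prod_mono)
  qed (use prod_a True in auto)
next
  case False
  have "convergent_prod a"
    using prod_a False a_pos
    by (subst convergent_prod_iff_nz_lim) (auto simp: LIMSEQ_lessThan_iff_atMost[symmetric] less_imp_neq[symmetric])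
  then have "a \<longlonglongrightarrow> 1"
    by (rule convergent_prod_imp_LIMSEQ)
  define d where "d = (1 + c) / 2"
  have "0 \<le> c"
    using frequently_ex[OF freq] b_nonneg by (meson order_trans)
  then have "0 < d" "d < 1" "c / d < 1"
    using \<open>c < 1\<close> by (auto simp: d_def)
  have "\<forall>\<^sub>F i in sequentially. d < a i"
    using \<open>a \<longlonglongrightarrow> 1\<close> \<open>d < 1\<close> by (rule order_tendstoD)
  with freq have "\<exists>\<^sub>F i in sequentially. d < a i \<and> b i \<le> c"
    by (rule frequently_eventually_conj)
  then have "\<exists>\<^sub>F i in sequentially. b i / a i \<le> c / d"
    by (rule frequently_mono[rotated]) (use \<open>0 < d\<close> \<open>0 \<le> c\<close> b_nonneg in \<open>auto intro: frac_le\<close>)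
  then have "(\<lambda>n. \<Prod>i<n. b i / a i) \<longlonglongrightarrow> 0"
    using \<open>c / d < 1\<close> a_pos b_nonneg b_le_a
    by (intro prod_tendsto_0_if_frequently_le) (auto intro: divide_nonneg_pos)
  then have "(\<lambda>n. (\<Prod>i<n. b i / a i) * (\<Prod>i<n. a i)) \<longlonglongrightarrow> 0 * r"
    using prod_a by (rule tendsto_mult)
  moreover have "(\<Prod>i<n. b i / a i) * (\<Prod>i<n. a i) = (\<Prod>i<n. b i)" for n
    using a_pos by (simp add: prod.distrib[symmetric] less_imp_neq[symmetric])
  ultimately show ?thesis
    by simp
qed

lemma vol_eqI: "has_vol C v \<Longrightarrow> vol C = v"
  unfolding has_vol_def vol_def by (rule limI)

lemma has_vol_0_if_null_side:
  assumes "emeasure lborel (C j) = 0"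
  shows "has_vol C 0"
  unfolding has_vol_def
proof (rule tendsto_eventually)
  show "\<forall>\<^sub>F n in sequentially. (\<Prod>i<n. emeasure lborel (C i)) = 0"
    unfolding eventually_sequentially using assms by (intro exI[of _ "Suc j"]) auto
qed

lemma finite_rectangle_null_side_or_finite_sides:
  assumes "finite_rectangle C"
  shows "(\<exists>j. emeasure lborel (C j) = 0) \<or> (\<forall>i. 0 < emeasure lborel (C i) \<and> emeasure lborel (C i) < \<infinity>)"
proof (rule ccontr)
  assume "\<not> ?thesis"
  then obtain j where j: "emeasure lborel (C j) = \<infinity>" and nonnull: "\<And>i. emeasure lborel (C i) \<noteq> 0"
    by (auto simp: less_top[symmetric] zero_less_iff_neq_zero)
  have "has_vol C \<infinity>"
    unfolding has_vol_def
  proof (rule tendsto_eventually)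
    show "\<forall>\<^sub>F n in sequentially. (\<Prod>i<n. emeasure lborel (C i)) = \<infinity>"
      unfolding eventually_sequentially
      using j nonnull by (intro exI[of _ "Suc j"]) (auto simp: ennreal_prod_eq_top)
  qed
  moreover obtain v where "has_vol C v" "v < \<infinity>"
    using assms unfolding finite_rectangle_def by blast
  ultimately show False
    unfolding has_vol_def using LIMSEQ_unique by fastforce
qed

lemma has_vol_ennreal_iff:
  assumes "\<And>i. emeasure lborel (C i) < \<infinity>" and "0 \<le> r"
  shows "has_vol C (ennreal r) \<longleftrightarrow> (\<lambda>n. \<Prod>i<n. measure lborel (C i)) \<longlonglongrightarrow> r"
proof -
  have "(\<Prod>i<n. emeasure lborel (C i)) = ennreal (\<Prod>i<n. measure lborel (C i))" for n
    using assms(1) by (simp add: emeasure_eq_ennreal_measure less_top prod_ennreal)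
  then show ?thesis
    unfolding has_vol_def using assms(2) by (simp add: prod_nonneg)
qed

lemma has_vol_Int_0_if_finite_sides:
  fixes c :: ennreal
  assumes "has_vol C v" and "v < \<infinity>" and C_sets: "\<And>i. C i \<in> sets borel"
    and sides: "\<And>i. 0 < emeasure lborel (C i)" "\<And>i. emeasure lborel (C i) < \<infinity>"
    and D: "\<And>i. D i \<in> sets borel"
    and "c < 1" and freq: "\<exists>\<^sub>F i in sequentially. emeasure lborel (D i) \<le> c"
  shows "has_vol (\<lambda>i. C i \<inter> D i) 0"
proof -
  obtain r where r: "0 \<le> r" "has_vol C (ennreal r)"
    using \<open>has_vol C v\<close> \<open>v < \<infinity>\<close> by (cases v) auto
  have "emeasure lborel (C i \<inter> D i) \<le> emeasure lborel (C i)" for i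
    using C_sets by (intro emeasure_mono) auto
  then have CD_finite: "emeasure lborel (C i \<inter> D i) < \<infinity>" for i
    using sides(2) by (rule le_less_trans)
  have c_finite: "c < top"
    using \<open>c < 1\<close> by (auto simp: less_top[symmetric])
  let ?a = "\<lambda>i. measure lborel (C i)" and ?b = "\<lambda>i. measure lborel (C i \<inter> D i)"
  have "(\<lambda>n. \<Prod>i<n. ?a i) \<longlonglongrightarrow> r"
    using r sides by (simp add: has_vol_ennreal_iff)
  moreover have "0 < ?a i" for i
    using sides by (simp add: measure_def enn2real_positive_iff)
  moreover have "?b i \<le> ?a i" for i
    using sides C_sets D by (intro measure_mono_fmeasurable) (auto simp: fmeasurable_def)
  moreover have "enn2real c < 1"
    using \<open>c < 1\<close> c_finite by simp
  moreover have "\<exists>\<^sub>F i in sequentially. ?b i \<le> enn2real c"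
    using freq
  proof (rule frequently_mono[rotated], intro allI impI)
    fix i assume "emeasure lborel (D i) \<le> c"
    then have "emeasure lborel (C i \<inter> D i) \<le> c"
      using D[of i] emeasure_mono[of "C i \<inter> D i" "D i" lborel] by auto
    then show "?b i \<le> enn2real c"
      unfolding measure_def using c_finite by (rule enn2real_mono)
  qed
  ultimately have "(\<lambda>n. \<Prod>i<n. ?b i) \<longlonglongrightarrow> 0"
    by (intro prod_tendsto_0_if_dominated_frequently_le) auto
  then show ?thesis
    using has_vol_ennreal_iff[of "\<lambda>i. C i \<inter> D i" 0] CD_finite by simp
qed

lemma has_vol_Int_0_if_frequently_small:
  fixes c :: ennreal
  assumes C: "finite_rectangle C" and D: "\<And>i. D i \<in> sets borel"
    and "c < 1" and freq: "\<exists>\<^sub>F i in sequentially. emeasure lborel (D i) \<le> c"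
  shows "has_vol (\<lambda>i. C i \<inter> D i) 0"
  using finite_rectangle_null_side_or_finite_sides[OF C]
proof
  assume "\<exists>j. emeasure lborel (C j) = 0"
  then obtain j where "emeasure lborel (C j) = 0" ..
  then have "emeasure lborel (C j \<inter> D j) = 0"
    using C D unfolding finite_rectangle_def by (metis emeasure_mono inf_le1 le_zero_eq sets_lborel)
  then show ?thesis
    by (rule has_vol_0_if_null_side)
next
  assume "\<forall>i. 0 < emeasure lborel (C i) \<and> emeasure lborel (C i) < \<infinity>"
  with C D \<open>c < 1\<close> freq show ?thesis
    unfolding finite_rectangle_def by (blast intro: has_vol_Int_0_if_finite_sides)
qed

lemma Pi_in_B_inf:
  assumes "\<And>i. D i \<in> sets borel"
  shows "Pi UNIV D \<in> B_inf"
proof -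
  have "Pi UNIV D = (\<Inter>m. {x. \<forall>i<m. x i \<in> D i})"
    by (auto simp: Pi_iff)
  moreover have "{x. \<forall>i<m. x i \<in> D i} \<in> cylinders" for m
    unfolding cylinders_def using assms by blast
  ultimately show ?thesis
    unfolding B_inf_def by (auto intro: sigma_sets_Inter sigma_sets.Basic)
qed

lemma mu_star_le_suminf_vol:
  "(\<And>n. finite_rectangle (R n)) \<Longrightarrow> A \<subseteq> (\<Union>n. Pi UNIV (R n)) \<Longrightarrow> mu_star A \<le> (\<Sum>n. vol (R n))"
  unfolding mu_star_def by (rule INF_lower) simp

lemma mu_star_less_top_imp_cover:
  assumes "mu_star A < \<infinity>"
  obtains R :: "nat \<Rightarrow> nat \<Rightarrow> real set" where "\<And>n. finite_rectangle (R n)" "A \<subseteq> (\<Union>n. Pi UNIV (R n))"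
proof -
  let ?covers = "{R :: nat \<Rightarrow> nat \<Rightarrow> real set. (\<forall>n. finite_rectangle (R n)) \<and> A \<subseteq> (\<Union>n. Pi UNIV (R n))}"
  have mu_star_A: "mu_star A = (INF R\<in>?covers. \<Sum>n. vol (R n))"
    unfolding mu_star_def ..
  have "?covers \<noteq> {}"
  proof
    assume empty: "?covers = {}"
    have "mu_star A = \<infinity>"
      by (simp only: mu_star_A empty INF_empty infinity_ennreal_def)
    with assms show False
      by simp
  qed
  then show thesis
    using that by blast
qed

lemma mu_star_subset_Pi_eq_0:
  fixes c :: ennreal
  assumes D: "\<And>i. D i \<in> sets borel"
    and "c < 1" and freq: "\<exists>\<^sub>F i in sequentially. emeasure lborel (D i) \<le> c"
    and "A \<subseteq> Pi UNIV D" and "mu_star A < \<infinity>"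
  shows "mu_star A = 0"
proof -
  obtain R :: "nat \<Rightarrow> nat \<Rightarrow> real set"
    where R: "\<And>n. finite_rectangle (R n)" and cover: "A \<subseteq> (\<Union>n. Pi UNIV (R n))"
    using mu_star_less_top_imp_cover[OF \<open>mu_star A < \<infinity>\<close>] by blast
  define R' where "R' n i = R n i \<inter> D i" for n i
  have has_vol_R': "has_vol (R' n) 0" for n
    unfolding R'_def using R D \<open>c < 1\<close> freq by (rule has_vol_Int_0_if_frequently_small)
  then have vol_R': "vol (R' n) = 0" for n
    by (rule vol_eqI)
  have "finite_rectangle (R' n)" for n
    using R[of n] D has_vol_R'[of n] unfolding finite_rectangle_def R'_def by auto
  moreover have "A \<subseteq> (\<Union>n. Pi UNIV (R' n))"
    using cover \<open>A \<subseteq> Pi UNIV D\<close> by (fastforce simp: R'_def)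
  ultimately have "mu_star A \<le> (\<Sum>n. vol (R' n))"
    by (rule mu_star_le_suminf_vol)
  then show ?thesis
    by (simp add: vol_R')
qed

lemma not_subset_UN_if_all_null_but_one:
  fixes S :: "nat \<Rightarrow> 'a set"
  assumes S: "\<And>n. S n \<in> sets M"
    and at_most_one: "\<And>n m. S n \<notin> null_sets M \<Longrightarrow> S m \<notin> null_sets M \<Longrightarrow> n = m"
    and smaller: "\<And>n. emeasure M (S n) < emeasure M B"
  shows "\<not> B \<subseteq> (\<Union>n. S n)"
proof
  assume "B \<subseteq> (\<Union>n. S n)"
  then have "emeasure M B \<le> emeasure M (\<Union>n. S n)"
    using S by (intro emeasure_mono) auto
  moreover have "emeasure M (\<Union>n. S n) < emeasure M B"
  proof (cases "\<exists>m. S m \<notin> null_sets M")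
    case True
    then obtain m where m: "S m \<notin> null_sets M" ..
    have "(\<Union>n. S n) = S m \<union> (\<Union>n. if n = m then {} else S n)"
      by auto
    moreover have "(\<Union>n. if n = m then {} else S n) \<in> null_sets M"
      using at_most_one m by (intro null_sets_UN) auto
    ultimately have "emeasure M (\<Union>n. S n) = emeasure M (S m)"
      using S by (simp add: emeasure_Un_null_set)
    with smaller show ?thesis
      by simp
  next
    case False
    then have "(\<Union>n. S n) \<in> null_sets M"
      by auto
    then have "emeasure M (\<Union>n. S n) = 0"
      by (rule null_setsD1)
    with smaller[of 0] show ?thesis
      by (metis le_less_trans zero_le)
  qed
  ultimately show False
    by simp
qed

lemma Pi_not_covered_by_finite_rectangles:
  fixes R :: "nat \<Rightarrow> nat \<Rightarrow> real set" and g :: "nat \<Rightarrow> nat"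
  assumes pos: "\<And>i. 0 < emeasure lborel (D i)"
    and "inj g" and infinite: "\<And>n. emeasure lborel (D (g n)) = \<infinity>"
    and R: "\<And>n. finite_rectangle (R n)"
  shows "\<not> Pi UNIV D \<subseteq> (\<Union>n. Pi UNIV (R n))"
proof
  assume cover: "Pi UNIV D \<subseteq> (\<Union>n. Pi UNIV (R n))"
  have R_sets: "R n i \<in> sets lborel" for n i
    using R unfolding finite_rectangle_def by simp
  have "\<exists>k. emeasure lborel (R n k) = 0 \<or> (k = g n \<and> emeasure lborel (R n k) < \<infinity>)" for n
    using finite_rectangle_null_side_or_finite_sides[OF R[of n]] by blast
  then obtain j where j: "\<And>n. emeasure lborel (R n (j n)) = 0 \<or> (j n = g n \<and> emeasure lborel (R n (j n)) < \<infinity>)"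
    by metis
  have "\<not> D i \<subseteq> (\<Union>n. if j n = i then R n i else {})" for i
  proof (rule not_subset_UN_if_all_null_but_one)
    show "(if j n = i then R n i else {}) \<in> sets lborel" for n
      using R_sets by simp
    show "n = m"
      if "(if j n = i then R n i else {}) \<notin> null_sets lborel"
        and "(if j m = i then R m i else {}) \<notin> null_sets lborel" for n m
      using that j[of n] j[of m] R_sets \<open>inj g\<close> by (auto split: if_splits dest: injD)
    show "emeasure lborel (if j n = i then R n i else {}) < emeasure lborel (D i)" for n
      using j[of n] pos[of i] infinite[of n] by auto
  qed
  then obtain x where "\<And>i. x i \<in> D i" and x_avoids: "\<And>i n. j n = i \<Longrightarrow> x i \<notin> R n i"
    by (simp add: subset_iff) metis
  then obtain n where "x \<in> Pi UNIV (R n)"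
    using cover by blast
  with x_avoids[of n "j n"] show False
    by (simp add: Pi_iff)
qed

lemma mu_star_Pi_eq_top:
  fixes g :: "nat \<Rightarrow> nat"
  assumes "\<And>i. 0 < emeasure lborel (D i)"
    and "inj g" and "\<And>n. emeasure lborel (D (g n)) = \<infinity>"
  shows "mu_star (Pi UNIV D) = \<infinity>"
proof (rule ccontr)
  assume "mu_star (Pi UNIV D) \<noteq> \<infinity>"
  then obtain R :: "nat \<Rightarrow> nat \<Rightarrow> real set"
    where "\<And>n. finite_rectangle (R n)" "Pi UNIV D \<subseteq> (\<Union>n. Pi UNIV (R n))"
    using mu_star_less_top_imp_cover[of "Pi UNIV D"] by (auto simp: less_top)
  with Pi_not_covered_by_finite_rectangles[of D g R] assms show False
    by blast
qed

definition witness_side :: "nat \<Rightarrow> real set" where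
  "witness_side i = (if even i then {0..1/2} else UNIV)"

lemma witness_side_borel: "witness_side i \<in> sets borel"
  by (simp add: witness_side_def)

lemma mu_star_witness_eq_top: "mu_star (Pi UNIV witness_side) = \<infinity>"
proof (rule mu_star_Pi_eq_top)
  show "0 < emeasure lborel (witness_side i)" for i
    by (simp add: witness_side_def ennreal_inverse_positive)
  show "inj (\<lambda>n. Suc (2 * n))"
    by (simp add: inj_def)
  show "emeasure lborel (witness_side (Suc (2 * n))) = \<infinity>" for n
    by (simp add: witness_side_def)
qed

lemma mu_star_subset_witness_eq_0:
  assumes "A \<subseteq> Pi UNIV witness_side" and "mu_star A < \<infinity>"
  shows "mu_star A = 0"
proof (rule mu_star_subset_Pi_eq_0)
  show "ennreal (1/2) < 1"
    by (simp only: ennreal_less_one_iff)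
  show "\<exists>\<^sub>F i in sequentially. emeasure lborel (witness_side i) \<le> ennreal (1/2)"
    unfolding frequently_sequentially
  proof
    show "\<exists>i\<ge>N. emeasure lborel (witness_side i) \<le> ennreal (1/2)" for N
      by (intro exI[of _ "2 * N"]) (simp add: witness_side_def)
  qed
qed (use assms witness_side_borel in auto)

lemma not_semi_finite_mu: "\<not> semi_finite B_inf mu"
proof
  assume semi_finite: "semi_finite B_inf mu"
  have E: "Pi UNIV witness_side \<in> B_inf"
    using witness_side_borel by (rule Pi_in_B_inf)
  then have "mu (Pi UNIV witness_side) = \<infinity>"
    by (simp add: mu_def mu_star_witness_eq_top)
  with E semi_finite obtain F where "F \<in> B_inf" "F \<subseteq> Pi UNIV witness_side" "0 < mu F" "mu F < \<infinity>"
    unfolding semi_finite_def by blast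
  then show False
    using mu_star_subset_witness_eq_0[of F] by (simp add: mu_def)
qed

theorem theoremA1:
  shows "\<not> localizable B_inf mu"
  using not_semi_finite_mu unfolding localizable_def by blast

end
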